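(* Let $1\le N_a<N_b$, $\mathcal N=N_a+N_b$, real $\kappa_1<\dots<\kappa_{\mathcal N}$ with indices taken modulo $\mathcal N$. For $q=(q_1,q_2)\in\mathbb R^2$ define $q_{mn}=q_2-(\kappa_m+\kappa_n)q_1+\kappa_m\kappa_n$, $\widetilde q_{mn}=(\kappa_m-\kappa_n)q_{mn}$, and $\rho_k(q)=\theta(\widetilde q_{k,k-N_a})\,\theta(\widetilde q_{k+N_a,k})$, where $\theta$ is the Heaviside step function. Fix $m$. Then the region of the $q$-plane with characteristic function $$P_m(q)=\prod_{k=m+N_a}^{m+N_b}\rho_k(q)$$ is a polygon contained in the parabolic region $q_2\ge q_1^2$ and having a vertex at the point $Q_m=(\kappa_m,\kappa_m^2)$. More precisely, this polygon is contained in the polygon with vertices $Q_m,Q_{m+1},\dots,Q_{m+N_b}$ (where $Q_l=(\kappa_l,\kappa_l^2)$), coincides with that polygon when $N_a=1$, and lies in the strip $\min_{m\le l\le m+N_b}\kappa_l\le q_1\le\max_{m\le l\le m+N_b}\kappa_l$.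
   Context: Indices of $\kappa$ are read modulo $\mathcal N$, i.e. $\kappa_{l+\mathcal N}=\kappa_l$ for all $l\in\mathbb Z$. *)

theory Defs
  imports "HOL-Analysis.Analysis"
begin

text \<open>Heaviside step function, with the convention theta(0) = 1 (closed regions).\<close>
definition heaviside :: "real \<Rightarrow> real" where
  "heaviside x = (if x \<ge> 0 then 1 else 0)"

definition qmn :: "(int \<Rightarrow> real) \<Rightarrow> real \<times> real \<Rightarrow> int \<Rightarrow> int \<Rightarrow> real" where
  "qmn \<kappa> q m n = snd q - (\<kappa> m + \<kappa> n) * fst q + \<kappa> m * \<kappa> n"

definition qtilde :: "(int \<Rightarrow> real) \<Rightarrow> real \<times> real \<Rightarrow> int \<Rightarrow> int \<Rightarrow> real" where
  "qtilde \<kappa> q m n = (\<kappa> m - \<kappa> n) * qmn \<kappa> q m n"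

definition rho :: "(int \<Rightarrow> real) \<Rightarrow> nat \<Rightarrow> real \<times> real \<Rightarrow> int \<Rightarrow> real" where
  "rho \<kappa> Na q k = heaviside (qtilde \<kappa> q k (k - int Na)) * heaviside (qtilde \<kappa> q (k + int Na) k)"

definition Pm :: "(int \<Rightarrow> real) \<Rightarrow> nat \<Rightarrow> nat \<Rightarrow> int \<Rightarrow> real \<times> real \<Rightarrow> real" where
  "Pm \<kappa> Na Nb m q = (\<Prod>k\<in>{m + int Na .. m + int Nb}. rho \<kappa> Na q k)"

definition region :: "(int \<Rightarrow> real) \<Rightarrow> nat \<Rightarrow> nat \<Rightarrow> int \<Rightarrow> (real \<times> real) set" where
  "region \<kappa> Na Nb m = {q. Pm \<kappa> Na Nb m q = 1}"

definition Qpt :: "(int \<Rightarrow> real) \<Rightarrow> int \<Rightarrow> real \<times> real" where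
  "Qpt \<kappa> l = (\<kappa> l, (\<kappa> l)^2)"

end

theory Submission
  imports Defs "HOL-Library.Periodic_Fun"
begin

text \<open>
  Write \<open>Q l = (\<kappa> l, (\<kappa> l)\<^sup>2)\<close>. The quantity \<open>qtilde \<kappa> q m n\<close> is the signed area
  \<open>orient (Q n) (Q m) q\<close>, so \<open>rho \<kappa> Na q k = 1\<close> says that \<open>q\<close> lies left of the chords
  \<open>Q (k - Na) \<rightarrow> Q k\<close> and \<open>Q k \<rightarrow> Q (k + Na)\<close> of the parabola: the region is a finite
  intersection of half-planes. As \<open>\<kappa>\<close> is cyclically increasing, \<open>Q i, Q j, Q l\<close> are
  positively oriented whenever \<open>i < j < l < i + N\<close>, so \<open>Q m, \<dots>, Q (m + Nb)\<close> is a convex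
  polygon traversed counterclockwise. The chords of step \<open>Na\<close> inside it, together with its
  closing edge \<open>Q (m + Nb) \<rightarrow> Q m\<close> (the chord at \<open>k = m + Nb\<close>, by periodicity), confine
  \<open>q\<close> to one of the fan triangles \<open>Q m, Q l, Q (l + 1)\<close>; hence the region lies in the polygon
  and above the parabola. For \<open>Na = 1\<close> the chords are exactly the edges of the polygon.
  Finally \<open>Q m\<close> lies in the region and on the parabola, so it is an extreme point.
\<close>

definition orient :: "real \<times> real \<Rightarrow> real \<times> real \<Rightarrow> real \<times> real \<Rightarrow> real" where
  "orient A B C = (fst B - fst A) * (snd C - snd A) - (snd B - snd A) * (fst C - fst A)"

lemma orient_rotate: "orient A B C = orient B C A"
  by (simp add: orient_def algebra_simps)

lemma orient_swap: "orient A B C = - orient B A C"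
  by (simp add: orient_def algebra_simps)

lemma orient_swap_last: "orient A B C = - orient A C B"
  by (simp add: orient_def algebra_simps)

lemma orient_degenerate [simp]: "orient A B A = 0" "orient A B B = 0" "orient A A B = 0"
  by (simp_all add: orient_def)

lemma orient_halfplane:
  "{q. 0 \<le> orient A B q} =
     {x. (snd B - snd A, fst A - fst B) \<bullet> x \<le> (snd B - snd A) * fst A - (fst B - fst A) * snd A}"
  by (auto simp: orient_def inner_prod_def algebra_simps)

lemma convex_orient_halfplane: "convex {q. 0 \<le> orient A B q}"
  unfolding orient_halfplane by (rule convex_halfspace_le)

lemma polyhedron_orient_halfplane: "polyhedron {q. 0 \<le> orient A B q}"
  unfolding orient_halfplane by (rule polyhedron_halfspace_le)

text \<open>The signed areas \<open>orient B C q, orient C A q, orient A B q\<close> are \<open>orient A B C\<close> times the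
  barycentric coordinates of \<open>q\<close> with respect to \<open>A, B, C\<close>.\<close>

lemma in_convex_hull_triangle_orient:
  assumes ABC: "orient A B C > 0"
    and "orient B C q \<ge> 0" "orient C A q \<ge> 0" "orient A B q \<ge> 0"
  shows "q \<in> convex hull {A, B, C}"
proof -
  define u where "u = orient B C q / orient A B C"
  define v where "v = orient C A q / orient A B C"
  define w where "w = orient A B q / orient A B C"
  have "u + v + w = 1"
    using ABC by (simp add: u_def v_def w_def field_simps) (simp add: orient_def algebra_simps)
  moreover have "0 \<le> u" "0 \<le> v" "0 \<le> w"
    using assms by (simp_all add: u_def v_def w_def)
  moreover have "q = u *\<^sub>R A + v *\<^sub>R B + w *\<^sub>R C"
    using ABC by (simp add: prod_eq_iff u_def v_def w_def field_simps)
      (simp add: orient_def algebra_simps)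
  ultimately show ?thesis
    unfolding convex_hull_3 by blast
qed

text \<open>In a convex polygon \<open>A, \<dots>, D, \<dots>, B, C\<close> the vertex \<open>B\<close> lies weakly right of the chord
  \<open>D C\<close>; then every point left of \<open>D C\<close> and of the edge \<open>C A\<close> is left of the edge \<open>B C\<close>.\<close>

lemma orient_nonneg_from_chord:
  assumes ABC: "orient A B C > 0" and DCA: "orient D C A > 0" and DCB: "orient D C B \<le> 0"
    and DCq: "orient D C q \<ge> 0" and CAq: "orient C A q \<ge> 0"
  shows "orient B C q \<ge> 0"
proof -
  have identity: "orient D C q * orient A B C = orient B C q * orient D C A + orient C A q * orient D C B"
    by (simp add: orient_def algebra_simps)
  have "orient C A q * orient D C B \<le> 0"
    using CAq DCB by (rule mult_nonneg_nonpos)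
  moreover have "orient D C q * orient A B C \<ge> 0"
    using DCq ABC by simp
  ultimately have "orient B C q * orient D C A \<ge> 0"
    using identity by linarith
  then show ?thesis
    using DCA by (simp add: zero_le_mult_iff)
qed

lemma convex_polygon_hull:
  fixes P :: "nat \<Rightarrow> real \<times> real" and a n :: nat
  assumes convex_polygon: "\<And>i j k. i < j \<Longrightarrow> j < k \<Longrightarrow> k \<le> n \<Longrightarrow> orient (P i) (P j) (P k) > 0"
    and "1 \<le> a" "a < n"
    and chords: "\<And>b. b + a \<le> n \<Longrightarrow> orient (P b) (P (b + a)) q \<ge> 0"
    and closing_edge: "orient (P n) (P 0) q \<ge> 0"
  shows "q \<in> convex hull (P ` {0..n})"
  \<comment> \<open>If \<open>q\<close> is left of the diagonal \<open>P 0 \<rightarrow> P n\<close> it lies in the last fan triangle,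
    otherwise that diagonal is the closing edge of the polygon without its last vertex.\<close>
  using convex_polygon \<open>a < n\<close> chords closing_edge
proof (induction n)
  case 0
  then show ?case by simp
next
  case (Suc n)
  show ?case
  proof (cases "orient (P 0) (P n) q \<ge> 0")
    case True
    define d where "d = Suc n - a"
    have d: "1 \<le> d" "d \<le> n" "d + a = Suc n"
      using \<open>1 \<le> a\<close> Suc.prems(2) by (auto simp: d_def)
    have ABC: "orient (P 0) (P n) (P (Suc n)) > 0"
      using Suc.prems(1)[of 0 n "Suc n"] d by simp
    have DCA: "orient (P d) (P (Suc n)) (P 0) > 0"
      using Suc.prems(1)[of 0 d "Suc n"] d orient_rotate[of "P 0"] by simp
    have DCB: "orient (P d) (P (Suc n)) (P n) \<le> 0"
    proof (cases "d = n")
      case False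
      then have "orient (P d) (P n) (P (Suc n)) > 0"
        using Suc.prems(1)[of d n "Suc n"] d by simp
      then show ?thesis
        using orient_swap_last[of "P d" "P (Suc n)" "P n"] by simp
    qed simp
    have "orient (P n) (P (Suc n)) q \<ge> 0"
      using orient_nonneg_from_chord[OF ABC DCA DCB] Suc.prems(3)[of d] Suc.prems(4) d by simp
    then have "q \<in> convex hull {P 0, P n, P (Suc n)}"
      using in_convex_hull_triangle_orient[OF ABC _ Suc.prems(4) True] by blast
    also have "\<dots> \<subseteq> convex hull (P ` {0..Suc n})"
      by (rule hull_mono) auto
    finally show ?thesis .
  next
    case False
    have "a \<noteq> n"
      using Suc.prems(3)[of 0] False by auto
    moreover have "orient (P n) (P 0) q \<ge> 0"
      using False orient_swap[of "P n" "P 0" q] by simp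
    ultimately have "q \<in> convex hull (P ` {0..n})"
      using Suc.prems by (intro Suc.IH) auto
    also have "\<dots> \<subseteq> convex hull (P ` {0..Suc n})"
      by (rule hull_mono) auto
    finally show ?thesis .
  qed
qed

lemma convex_above_parabola: "convex {q :: real \<times> real. (fst q)\<^sup>2 \<le> snd q}"
  using convex_epigraphI[OF convex_power2] by (simp add: epigraph_def)

text \<open>The tangent line \<open>q\<^sub>2 = 2 t q\<^sub>1 - t\<^sup>2\<close> supports the region above the parabola and meets it
  only at \<open>(t, t\<^sup>2)\<close>.\<close>

lemma extreme_point_on_parabola:
  fixes S :: "(real \<times> real) set"
  assumes "convex S" and "(t, t\<^sup>2) \<in> S" and above: "\<forall>q\<in>S. (fst q)\<^sup>2 \<le> snd q"
  shows "(t, t\<^sup>2) extreme_point_of S"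
proof -
  have tangent: "(- 2 * t, 1) \<bullet> q + t\<^sup>2 = (fst q - t)\<^sup>2 + (snd q - (fst q)\<^sup>2)" for q
    by (simp add: inner_prod_def power2_eq_square algebra_simps)
  have tangent_ge: "(- 2 * t, 1) \<bullet> q \<ge> - t\<^sup>2" if "q \<in> S" for q
  proof -
    have "(fst q)\<^sup>2 \<le> snd q"
      using above that by blast
    then show ?thesis
      using tangent[of q] zero_le_power2[of "fst q - t"] by linarith
  qed
  have touches: "q = (t, t\<^sup>2)" if "q \<in> S" and "(- 2 * t, 1) \<bullet> q = - t\<^sup>2" for q
  proof -
    have "(fst q)\<^sup>2 \<le> snd q"
      using above that(1) by blast
    then have "(fst q - t)\<^sup>2 \<le> 0"
      using tangent[of q] that(2) by linarith
    then have "fst q = t" by simp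
    then show ?thesis
      using tangent[of q] that(2) by (simp add: prod_eq_iff)
  qed
  have "S \<inter> {q. (- 2 * t, 1) \<bullet> q = - t\<^sup>2} = {(t, t\<^sup>2)}"
  proof (intro equalityI subsetI)
    show "q \<in> {(t, t\<^sup>2)}" if "q \<in> S \<inter> {q. (- 2 * t, 1) \<bullet> q = - t\<^sup>2}" for q
      using touches that by blast
    show "q \<in> S \<inter> {q. (- 2 * t, 1) \<bullet> q = - t\<^sup>2}" if "q \<in> {(t, t\<^sup>2)}" for q
      using that assms(2) by (simp add: inner_prod_def power2_eq_square)
  qed
  then have "{(t, t\<^sup>2)} face_of S"
    using face_of_Int_supporting_hyperplane_ge[OF \<open>convex S\<close> tangent_ge] by simp
  then show ?thesis
    by (simp add: face_of_singleton)
qed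

lemma orient_Qpt: "orient (Qpt \<kappa> i) (Qpt \<kappa> j) (Qpt \<kappa> l) = (\<kappa> j - \<kappa> i) * (\<kappa> l - \<kappa> i) * (\<kappa> l - \<kappa> j)"
  by (simp add: orient_def Qpt_def power2_eq_square algebra_simps)

lemma qtilde_eq_orient: "qtilde \<kappa> q a b = orient (Qpt \<kappa> b) (Qpt \<kappa> a) q"
  by (simp add: qtilde_def qmn_def orient_def Qpt_def power2_eq_square algebra_simps)

lemma convex_hull_Qpt_above_parabola: "convex hull (Qpt \<kappa> ` A) \<subseteq> {q. (fst q)\<^sup>2 \<le> snd q}"
  by (rule hull_minimal) (auto simp: Qpt_def convex_above_parabola)

lemma convex_hull_Qpt_strip:
  assumes "finite A"
  shows "convex hull (Qpt \<kappa> ` A) \<subseteq> {Min (\<kappa> ` A) .. Max (\<kappa> ` A)} \<times> UNIV"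
  by (rule hull_minimal) (auto simp: Qpt_def assms intro: convex_Times)

lemma prod_eq_1_iff_zero_one:
  fixes f :: "'a \<Rightarrow> 'b :: idom"
  assumes "finite A" and "\<forall>x\<in>A. f x = 0 \<or> f x = 1"
  shows "prod f A = 1 \<longleftrightarrow> (\<forall>x\<in>A. f x = 1)"
proof
  assume "prod f A = 1"
  then have "\<forall>x\<in>A. f x \<noteq> 0"
    using prod_zero_iff[OF \<open>finite A\<close>, of f] by auto
  then show "\<forall>x\<in>A. f x = 1"
    using assms(2) by blast
qed simp

lemma region_eq_halfplanes:
  "region \<kappa> Na Nb m = {q. \<forall>k\<in>{m + int Na .. m + int Nb}.
      0 \<le> orient (Qpt \<kappa> (k - int Na)) (Qpt \<kappa> k) q \<and> 0 \<le> orient (Qpt \<kappa> k) (Qpt \<kappa> (k + int Na)) q}"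
proof -
  have rho_eq_1: "rho \<kappa> Na q k = 1 \<longleftrightarrow>
      0 \<le> orient (Qpt \<kappa> (k - int Na)) (Qpt \<kappa> k) q \<and> 0 \<le> orient (Qpt \<kappa> k) (Qpt \<kappa> (k + int Na)) q"
    for q k
    by (simp add: rho_def heaviside_def qtilde_eq_orient)
  have "\<forall>k\<in>K. rho \<kappa> Na q k = 0 \<or> rho \<kappa> Na q k = 1" for q K
    by (simp add: rho_def heaviside_def)
  then have "Pm \<kappa> Na Nb m q = 1 \<longleftrightarrow> (\<forall>k\<in>{m + int Na .. m + int Nb}. rho \<kappa> Na q k = 1)" for q
    unfolding Pm_def by (intro prod_eq_1_iff_zero_one) simp_all
  then show ?thesis
    unfolding region_def rho_eq_1 by blast
qed

lemma region_eq_Inter_halfplanes: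
  "region \<kappa> Na Nb m = (\<Inter>k\<in>{m + int Na .. m + int Nb}.
      {q. 0 \<le> orient (Qpt \<kappa> (k - int Na)) (Qpt \<kappa> k) q} \<inter> {q. 0 \<le> orient (Qpt \<kappa> k) (Qpt \<kappa> (k + int Na)) q})"
  unfolding region_eq_halfplanes by auto

lemma convex_region: "convex (region \<kappa> Na Nb m)"
  unfolding region_eq_Inter_halfplanes
  by (intro convex_INT convex_Int convex_orient_halfplane)

lemma polyhedron_region: "polyhedron (region \<kappa> Na Nb m)"
  unfolding region_eq_Inter_halfplanes
  by (intro polyhedron_Inter) (auto intro: polyhedron_orient_halfplane)

locale cyclic_nodes = periodic_fun_simple \<kappa> "int N"
  for \<kappa> :: "int \<Rightarrow> real" and N :: nat +
  assumes strict_mono_period: "strict_mono_on {1 .. int N} \<kappa>"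
begin

lemma kappa_triple_pos_base:
  assumes "1 \<le> i" "i \<le> int N" and "i < j" "j < l" "l < i + int N"
  shows "(\<kappa> j - \<kappa> i) * (\<kappa> l - \<kappa> i) * (\<kappa> l - \<kappa> j) > 0"
proof -
  have increasing: "\<kappa> x < \<kappa> y" if "1 \<le> x" "x < y" "y \<le> int N" for x y
    using strict_mono_onD[OF strict_mono_period, of x y] that by simp
  have shift_back: "\<kappa> x = \<kappa> (x - int N)" for x
    using plus_period[of "x - int N"] by simp
  consider "l \<le> int N" | "j \<le> int N" "int N < l" | "int N < j"
    using assms by linarith
  then show ?thesis
  proof cases
    case 1
    then show ?thesis using increasing[of i j] increasing[of i l] increasing[of j l] assms by simp
  next
    case 2
    have "\<kappa> i < \<kappa> j" "\<kappa> l < \<kappa> i"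
      using increasing[of i j] increasing[of "l - int N" i] shift_back[of l] 2 assms by simp_all
    then show ?thesis
      by (simp add: mult_neg_neg mult.assoc)
  next
    case 3
    have "\<kappa> j < \<kappa> l" "\<kappa> l < \<kappa> i"
      using increasing[of "j - int N" "l - int N"] increasing[of "l - int N" i]
        shift_back[of l] shift_back[of j] 3 assms
      by simp_all
    then show ?thesis
      by (simp add: mult_neg_neg)
  qed
qed

lemma orient_Qpt_pos:
  assumes "i < j" "j < l" "l < i + int N"
  shows "orient (Qpt \<kappa> i) (Qpt \<kappa> j) (Qpt \<kappa> l) > 0"
proof -
  define s where "s = (i - 1) div int N"
  have shift: "\<kappa> x = \<kappa> (x - s * int N)" for x
    using minus_of_int[of x s] by simp
  have "i - s * int N = (i - 1) mod int N + 1"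
    unfolding s_def using minus_div_mult_eq_mod[of "i - 1" "int N"] by linarith
  moreover have "0 \<le> (i - 1) mod int N" "(i - 1) mod int N < int N"
    using assms by simp_all
  ultimately have "(\<kappa> (j - s * int N) - \<kappa> (i - s * int N)) * (\<kappa> (l - s * int N) - \<kappa> (i - s * int N))
      * (\<kappa> (l - s * int N) - \<kappa> (j - s * int N)) > 0"
    using assms by (intro kappa_triple_pos_base) linarith+
  then show ?thesis
    by (simp add: orient_Qpt flip: shift)
qed

lemma orient_Qpt_nonneg:
  assumes "i \<le> j" "j \<le> l" "l \<le> i + int N"
  shows "orient (Qpt \<kappa> i) (Qpt \<kappa> j) (Qpt \<kappa> l) \<ge> 0"
proof -
  consider "i = j \<or> j = l" | "l = i + int N" | "i < j" "j < l" "l < i + int N"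
    using assms by linarith
  then show ?thesis
  proof cases
    case 2
    then have "Qpt \<kappa> l = Qpt \<kappa> i"
      by (simp add: Qpt_def plus_period)
    then show ?thesis by simp
  qed (auto intro: less_imp_le orient_Qpt_pos)
qed

lemma orient_Qpt_chord_nonneg:
  assumes "a \<le> b" "b \<le> a + int N" and "b \<le> j \<and> j \<le> a + int N \<or> b - int N \<le> j \<and> j \<le> a"
  shows "orient (Qpt \<kappa> a) (Qpt \<kappa> b) (Qpt \<kappa> j) \<ge> 0"
  using assms orient_Qpt_nonneg[of a b j] orient_Qpt_nonneg[of j a b]
  by (auto simp: orient_rotate[of "Qpt \<kappa> j"])

end

locale parabola_region = cyclic_nodes \<kappa> "Na + Nb"
  for \<kappa> :: "int \<Rightarrow> real" and Na Nb :: nat +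
  assumes Na_pos: "1 \<le> Na" and Na_less_Nb: "Na < Nb"
begin

lemma region_subset_convex_hull: "region \<kappa> Na Nb m \<subseteq> convex hull (Qpt \<kappa> ` {m .. m + int Nb})"
proof
  fix q assume q: "q \<in> region \<kappa> Na Nb m"
  have left_chord: "0 \<le> orient (Qpt \<kappa> (k - int Na)) (Qpt \<kappa> k) q"
    and right_chord: "0 \<le> orient (Qpt \<kappa> k) (Qpt \<kappa> (k + int Na)) q"
    if "m + int Na \<le> k" "k \<le> m + int Nb" for k
    using q that by (auto simp: region_eq_halfplanes)
  have "q \<in> convex hull ((\<lambda>i. Qpt \<kappa> (m + int i)) ` {0..Nb})"
  proof (rule convex_polygon_hull[where a = Na])
    show "orient (Qpt \<kappa> (m + int i)) (Qpt \<kappa> (m + int j)) (Qpt \<kappa> (m + int k)) > 0"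
      if "i < j" "j < k" "k \<le> Nb" for i j k
      using that Na_pos by (intro orient_Qpt_pos) auto
    show "orient (Qpt \<kappa> (m + int b)) (Qpt \<kappa> (m + int (b + Na))) q \<ge> 0" if "b + Na \<le> Nb" for b
      using left_chord[of "m + int (b + Na)"] that by simp
    have "Qpt \<kappa> (m + int Nb + int Na) = Qpt \<kappa> m"
      using plus_period[of m] by (simp add: Qpt_def add_ac)
    then show "orient (Qpt \<kappa> (m + int Nb)) (Qpt \<kappa> (m + int 0)) q \<ge> 0"
      using right_chord[of "m + int Nb"] Na_less_Nb by simp
  qed (use Na_pos Na_less_Nb in auto)
  also have "(\<lambda>i. Qpt \<kappa> (m + int i)) ` {0..Nb} = Qpt \<kappa> ` {m .. m + int Nb}"
    by (simp add: image_image[symmetric, of "Qpt \<kappa>" "\<lambda>i. m + int i"]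
        image_image[symmetric, of "(+) m" int] image_int_atLeastAtMost add.commute)
  finally show "q \<in> convex hull (Qpt \<kappa> ` {m .. m + int Nb})" .
qed

lemma Qpt_base_in_region: "Qpt \<kappa> m \<in> region \<kappa> Na Nb m"
  unfolding region_eq_halfplanes
  by (auto intro!: orient_Qpt_chord_nonneg)

lemma convex_hull_subset_region_Na_1:
  assumes "Na = 1"
  shows "convex hull (Qpt \<kappa> ` {m .. m + int Nb}) \<subseteq> region \<kappa> Na Nb m"
proof (rule hull_minimal)
  show "Qpt \<kappa> ` {m .. m + int Nb} \<subseteq> region \<kappa> Na Nb m"
    unfolding region_eq_halfplanes using assms
    by (force intro!: orient_Qpt_chord_nonneg)
qed (rule convex_region)

end

theorem lemma5p1:
  fixes \<kappa> :: "int \<Rightarrow> real" and Na Nb :: nat and m :: int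
  assumes "1 \<le> Na" and "Na < Nb"
    and "\<And>l. \<kappa> (l + int (Na + Nb)) = \<kappa> l"
    and "strict_mono_on {1 .. int (Na + Nb)} \<kappa>"
  shows "polytope (region \<kappa> Na Nb m)
    \<and> Qpt \<kappa> m extreme_point_of (region \<kappa> Na Nb m)
    \<and> (\<forall>q \<in> region \<kappa> Na Nb m. snd q \<ge> (fst q)^2)
    \<and> region \<kappa> Na Nb m \<subseteq> convex hull (Qpt \<kappa> ` {m .. m + int Nb})
    \<and> (Na = 1 \<longrightarrow> region \<kappa> Na Nb m = convex hull (Qpt \<kappa> ` {m .. m + int Nb}))
    \<and> (\<forall>q \<in> region \<kappa> Na Nb m.
          Min (\<kappa> ` {m .. m + int Nb}) \<le> fst q \<and> fst q \<le> Max (\<kappa> ` {m .. m + int Nb}))"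
proof -
  interpret parabola_region \<kappa> Na Nb
    using assms by unfold_locales auto
  let ?R = "region \<kappa> Na Nb m" and ?H = "convex hull (Qpt \<kappa> ` {m .. m + int Nb})"
  have in_hull: "?R \<subseteq> ?H"
    by (rule region_subset_convex_hull)
  have above: "\<forall>q\<in>?R. (fst q)\<^sup>2 \<le> snd q"
    using in_hull convex_hull_Qpt_above_parabola by blast
  have "polytope ?R"
    using polyhedron_region bounded_subset[OF finite_imp_bounded_convex_hull in_hull]
    by (simp add: polytope_eq_bounded_polyhedron)
  moreover have "Qpt \<kappa> m extreme_point_of ?R"
    using extreme_point_on_parabola[OF convex_region _ above] Qpt_base_in_region
    by (simp add: Qpt_def)
  moreover have "\<forall>q\<in>?R. Min (\<kappa> ` {m .. m + int Nb}) \<le> fst q \<and> fst q \<le> Max (\<kappa> ` {m .. m + int Nb})"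
    using in_hull convex_hull_Qpt_strip[of "{m .. m + int Nb}" \<kappa>] by fastforce
  ultimately show ?thesis
    using above in_hull convex_hull_subset_region_Na_1 by blast
qed

end
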